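(* Let $d\ge2$, let $G$ be a germ and let $\mathcal{Q}_G$ be the (nonempty) set of all qplexes containing $G$. Define the stem $\mathscr{S}(G)=\bigcap_{Q\in\mathcal{Q}_G}Q$ and envelope $\mathscr{E}(G)=\bigcup_{Q\in\mathcal{Q}_G}Q$. Then $$\mathscr{S}(G)=\overline{\mathrm{conv}}(\Delta_{\rm e}\cup B_{\rm i}\cup G),\qquad \mathscr{E}(G)=\Delta\cap B_{\rm o}\cap G^*,$$ and $\mathscr{S}(G)$ and $\mathscr{E}(G)$ are mutually polar: $\mathscr{S}(G)^*=\mathscr{E}(G)$ and $\mathscr{E}(G)^*=\mathscr{S}(G)$. In particular (taking $G=\emptyset$) the intersection of all qplexes is $\overline{\mathrm{conv}}(\Delta_{\rm e}\cup B_{\rm i})$ and the union of all qplexes is $\Delta\cap B_{\rm o}$.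
   Context: Fix an integer $d\ge 2$. $\langle\cdot,\cdot\rangle$ is the standard inner product on $\mathbb{R}^{d^2}$, $\|\cdot\|$ the Euclidean norm. $\Delta=\{p\in\mathbb{R}^{d^2}: p(i)\ge0,\ \sum_ip(i)=1\}$; $H=\{u\in\mathbb{R}^{d^2}:\sum_i u(i)=1\}$; $c=(1/d^2,\dots,1/d^2)$. $\overline{\mathrm{conv}}(X)$ denotes the closed convex hull. For $A\subseteq H$ the polar is $A^*=\{u\in H:\langle u,v\rangle\ge\frac{1}{d(d+1)}\ \forall v\in A\}$. Out-ball: $B_{\rm o}=\{u\in H:\|u-c\|\le r_{\rm o}\}$, $r_{\rm o}^2=\frac{d-1}{d^2(d+1)}$. In-ball: $B_{\rm i}=\{u\in H:\|u-c\|\le r_{\rm i}\}$, $r_{\rm i}^2=\frac{1}{d^2(d^2-1)}$. Basis distributions: $e_k(i)=\frac{1}{d+1}(\delta_{ki}+\frac1d)$, $k=1,\dots,d^2$; basis simplex $\Delta_{\rm e}=\mathrm{conv}\{e_1,\dots,e_{d^2}\}$. A subset $A\subseteq\Delta$ is a germ if $\frac{1}{d(d+1)}\le\langle p,s\rangle\le\frac{2}{d(d+1)}$ for all $p,s\in A$. A qplex is a set $Q\subseteq\Delta\cap B_{\rm o}$ with $Q^*=Q$ (equivalently, a maximal germ). *)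

theory Defs
  imports "HOL-Analysis.Analysis"
begin

text \<open>Points of R^(d^2) are vectors real^'n with CARD('n) = d^2 (assumed in the theorem).
  The inner product is the standard one (\<bullet>), the norm is Euclidean.\<close>

definition probSimplex :: "(real^'n) set" where
  "probSimplex = {p. (\<forall>i. p $ i \<ge> 0) \<and> (\<Sum>i\<in>UNIV. p $ i) = 1}"

definition hypH :: "(real^'n) set" where
  "hypH = {u. (\<Sum>i\<in>UNIV. u $ i) = 1}"

definition cvec :: "nat \<Rightarrow> real^'n" where
  "cvec d = (\<chi> i. 1 / (real d)^2)"

definition polar :: "nat \<Rightarrow> (real^'n) set \<Rightarrow> (real^'n) set" where
  "polar d A = {u \<in> hypH. \<forall>v\<in>A. inner u v \<ge> 1 / (real d * (real d + 1))}"

definition outBall :: "nat \<Rightarrow> (real^'n) set" where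
  "outBall d = {u \<in> hypH. norm (u - cvec d) \<le> sqrt ((real d - 1) / ((real d)^2 * (real d + 1)))}"

definition inBall :: "nat \<Rightarrow> (real^'n) set" where
  "inBall d = {u \<in> hypH. norm (u - cvec d) \<le> sqrt (1 / ((real d)^2 * ((real d)^2 - 1)))}"

definition basisDist :: "nat \<Rightarrow> 'n \<Rightarrow> real^'n" where
  "basisDist d k = (\<chi> i. (1 / (real d + 1)) * ((if k = i then 1 else 0) + 1 / real d))"

definition basisSimplex :: "nat \<Rightarrow> (real^'n) set" where
  "basisSimplex d = convex hull (range (basisDist d))"

definition germ :: "nat \<Rightarrow> (real^'n) set \<Rightarrow> bool" where
  "germ d A \<longleftrightarrow> A \<subseteq> probSimplex \<and>
     (\<forall>p\<in>A. \<forall>s\<in>A. 1 / (real d * (real d + 1)) \<le> inner p s \<and> inner p s \<le> 2 / (real d * (real d + 1)))"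

definition qplex :: "nat \<Rightarrow> (real^'n) set \<Rightarrow> bool" where
  "qplex d Q \<longleftrightarrow> Q \<subseteq> probSimplex \<inter> outBall d \<and> polar d Q = Q"

end

theory Submission
  imports Defs
begin

text \<open>
  On H the inner product is
  1/d^2 + <u - c, v - c>, so by Cauchy--Schwarz the out-ball B_o is exactly the polar of the
  in-ball B_i, and the polar of the basis distributions e_k is the probability simplex;
  hence the polar of \<Delta>_e \<union> B_i \<union> G is \<Delta> \<inter> B_o \<inter> G*. Polars do not see closed convex hulls,
  and the separating hyperplane theorem gives the bipolar theorem for closed convex subsets
  of H containing c, so the stem candidate S and the envelope candidate E = S* are mutually
  polar. By Zorn's lemma every germ extends to a maximal germ, and a maximal germ is a
  qplex. Every point p of E extends G to a germ, so the union of the qplexes containing G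
  is E; since qplexes are self-polar, their intersection is the polar of their union,
  namely E* = S.
\<close>

lemma polar_Un: "polar d (A \<union> B) = polar d A \<inter> polar d B"
  by (auto simp: polar_def)

lemma polar_empty: "polar d {} = hypH"
  by (simp add: polar_def)

lemma polar_subset_hypH: "polar d A \<subseteq> hypH"
  by (simp add: polar_def)

lemma polar_antimono: "A \<subseteq> B \<Longrightarrow> polar d B \<subseteq> polar d A"
  by (auto simp: polar_def)

lemma polar_Union: "\<Q> \<noteq> {} \<Longrightarrow> polar d (\<Union>\<Q>) = (\<Inter>Q\<in>\<Q>. polar d Q)"
  by (auto simp: polar_def)

lemma subset_polar_iff:
  assumes "A \<subseteq> hypH" "B \<subseteq> hypH"
  shows "A \<subseteq> polar d B \<longleftrightarrow> B \<subseteq> polar d A"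
  using assms unfolding polar_def by (fastforce simp: inner_commute)

lemma hypH_eq_hyperplane: "hypH = {u. inner (\<chi> i. 1) u = 1}"
  by (simp add: hypH_def inner_vec_def)

lemma closed_hypH: "closed hypH"
  unfolding hypH_eq_hyperplane by (rule closed_hyperplane)

lemma convex_hypH: "convex hypH"
  unfolding hypH_eq_hyperplane by (rule convex_hyperplane)

lemma polar_closure: "polar d (closure A) = polar d A"
proof
  show "polar d (closure A) \<subseteq> polar d A"
    by (intro polar_antimono closure_subset)
  have "closure A \<subseteq> {v. 1 / (real d * (real d + 1)) \<le> inner u v}" if "u \<in> polar d A" for u
    using that by (intro closure_minimal closed_halfspace_ge) (auto simp: polar_def)
  then show "polar d A \<subseteq> polar d (closure A)"
    by (auto simp: polar_def)
qed

lemma polar_convex_hull: "polar d (convex hull A) = polar d A"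
proof
  show "polar d (convex hull A) \<subseteq> polar d A"
    by (intro polar_antimono hull_subset)
  have "convex hull A \<subseteq> {v. 1 / (real d * (real d + 1)) \<le> inner u v}" if "u \<in> polar d A" for u
    using that by (intro hull_minimal convex_halfspace_ge) (auto simp: polar_def)
  then show "polar d A \<subseteq> polar d (convex hull A)"
    by (auto simp: polar_def)
qed

lemma germ_Union_chain:
  assumes "\<C> \<noteq> {}" and chain: "subset.chain {M. germ d M \<and> G \<subseteq> M} \<C>"
  shows "germ d (\<Union>\<C>) \<and> G \<subseteq> \<Union>\<C>"
proof -
  have germs: "germ d X \<and> G \<subseteq> X" if "X \<in> \<C>" for X
    using chain that by (auto simp: subset_chain_def)
  have common: "\<exists>X\<in>\<C>. p \<in> X \<and> s \<in> X" if ps: "p \<in> \<Union>\<C>" "s \<in> \<Union>\<C>" for p s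
  proof -
    obtain X Y where "X \<in> \<C>" "p \<in> X" "Y \<in> \<C>" "s \<in> Y"
      using ps by blast
    moreover have "X \<subseteq> Y \<or> Y \<subseteq> X"
      using chain calculation by (simp add: subset_chain_def)
    ultimately show ?thesis
      by blast
  qed
  have "\<Union>\<C> \<subseteq> probSimplex"
    using germs unfolding germ_def by blast
  moreover have "1 / (real d * (real d + 1)) \<le> inner p s \<and> inner p s \<le> 2 / (real d * (real d + 1))"
    if ps: "p \<in> \<Union>\<C>" "s \<in> \<Union>\<C>" for p s
  proof -
    obtain X where "X \<in> \<C>" "p \<in> X" "s \<in> X"
      using common[OF ps] by blast
    then show ?thesis
      using germs unfolding germ_def by blast
  qed
  moreover have "G \<subseteq> \<Union>\<C>"
    using germs assms(1) by blast
  ultimately show ?thesis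
    by (simp add: germ_def)
qed

lemma outRadius_sq_identity:
  fixes x :: real assumes "x > 0"
  shows "1 / x^2 + (x - 1) / (x^2 * (x + 1)) = 2 / (x * (x + 1))"
  using assms by (simp add: divide_simps) (simp add: algebra_simps power2_eq_square)

lemma threshold_less_inverse_sq:
  fixes x :: real assumes "x > 0"
  shows "1 / (x * (x + 1)) < 1 / x^2"
  using assms by (simp add: divide_strict_left_mono power2_eq_square)

lemma inRadius_times_outRadius:
  fixes x :: real assumes "x \<ge> 2"
  shows "sqrt (1 / (x^2 * (x^2 - 1))) * sqrt ((x - 1) / (x^2 * (x + 1)))
    = 1 / x^2 - 1 / (x * (x + 1))"
proof -
  have "x^2 - 1 = (x - 1) * (x + 1)"
    by (simp add: algebra_simps power2_eq_square)
  then have "1 / (x^2 * (x^2 - 1)) * ((x - 1) / (x^2 * (x + 1))) = (1 / (x^2 * (x + 1)))^2"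
    using assms by (simp add: divide_simps) (simp add: eval_nat_numeral algebra_simps)
  moreover have "1 / x^2 - 1 / (x * (x + 1)) = 1 / (x^2 * (x + 1))"
    using assms by (simp add: divide_simps) (simp add: algebra_simps power2_eq_square)
  ultimately show ?thesis
    using assms by (simp add: real_sqrt_mult[symmetric])
qed

lemma inRadius_le_outRadius:
  fixes x :: real assumes "x \<ge> 2"
  shows "1 / (x^2 * (x^2 - 1)) \<le> (x - 1) / (x^2 * (x + 1))"
proof -
  have f: "x^2 - 1 = (x - 1) * (x + 1)"
    by (simp add: algebra_simps power2_eq_square)
  have "(x - 1) / (x^2 * (x + 1)) = (x - 1)^2 / (x^2 * (x^2 - 1))"
    using assms unfolding f by (simp add: power2_eq_square)
  moreover have "1 \<le> (x - 1)^2"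
    using assms by (simp add: one_le_power)
  moreover have "0 \<le> x^2 * (x^2 - 1)"
    using assms by (simp add: f)
  ultimately show ?thesis
    by (simp add: divide_right_mono)
qed

context
  fixes d :: nat
  assumes d_ge_2: "d \<ge> 2" and card_eq: "CARD('n::finite) = d^2"
begin

lemma real_d_pos: "real d > 0"
  using d_ge_2 by simp

lemma outRadius_sq_nonneg: "0 \<le> (real d - 1) / ((real d)^2 * (real d + 1))"
  using d_ge_2 by simp

lemma inRadius_denom_nonneg: "0 \<le> (real d)^2 * ((real d)^2 - 1)"
  using d_ge_2 by (simp add: one_le_power)

lemma sum_scaled_hypH:
  fixes u :: "real^'n"
  assumes "u \<in> hypH"
  shows "(\<Sum>i\<in>UNIV. a * u$i) = a"
  using assms by (simp add: hypH_def sum_distrib_left[symmetric])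

lemma cvec_in_hypH: "(cvec d :: real^'n) \<in> hypH"
  using card_eq real_d_pos by (simp add: hypH_def cvec_def)

lemma inner_cvec:
  fixes u :: "real^'n"
  assumes "u \<in> hypH"
  shows "inner u (cvec d) = 1 / (real d)^2"
  using sum_scaled_hypH[OF assms, of "1 / (real d)^2"]
  by (simp add: inner_vec_def cvec_def mult.commute)

lemma inner_hypH_centered:
  fixes u v :: "real^'n"
  assumes "u \<in> hypH" "v \<in> hypH"
  shows "inner u v = 1 / (real d)^2 + inner (u - cvec d) (v - cvec d)"
  using inner_cvec[OF assms(1)] inner_cvec[OF assms(2)] inner_cvec[OF cvec_in_hypH]
  by (simp add: inner_diff_left inner_diff_right inner_commute)

lemma threshold_le_inner_self:
  fixes u :: "real^'n"
  assumes "u \<in> hypH"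
  shows "1 / (real d * (real d + 1)) \<le> inner u u"
  using inner_hypH_centered[OF assms assms] threshold_less_inverse_sq[OF real_d_pos]
    inner_ge_zero[of "u - cvec d"]
  by linarith

lemma outBall_iff_inner:
  "(u :: real^'n) \<in> outBall d \<longleftrightarrow> u \<in> hypH \<and> inner u u \<le> 2 / (real d * (real d + 1))"
proof -
  have "norm (u - cvec d) \<le> sqrt r \<longleftrightarrow> (norm (u - cvec d))^2 \<le> r" for r
    by (metis norm_ge_zero real_sqrt_abs real_sqrt_le_iff abs_of_nonneg)
  then show ?thesis
    using inner_hypH_centered[of u u] outRadius_sq_identity[OF real_d_pos]
    unfolding outBall_def by (force simp: power2_norm_eq_inner)
qed

lemma inner_outBall_le:
  fixes u v :: "real^'n"
  assumes "u \<in> outBall d" "v \<in> outBall d"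
  shows "inner u v \<le> 2 / (real d * (real d + 1))"
proof -
  let ?r = "sqrt ((real d - 1) / ((real d)^2 * (real d + 1)))"
  have h: "u \<in> hypH" "v \<in> hypH" "norm (u - cvec d) \<le> ?r" "norm (v - cvec d) \<le> ?r"
    using assms by (auto simp: outBall_def)
  have "inner (u - cvec d) (v - cvec d) \<le> norm (u - cvec d) * norm (v - cvec d)"
    by (rule norm_cauchy_schwarz)
  also have "\<dots> \<le> ?r * ?r"
    using h outRadius_sq_nonneg by (intro mult_mono) auto
  also have "\<dots> = (real d - 1) / ((real d)^2 * (real d + 1))"
    using d_ge_2 by simp
  finally show ?thesis
    using inner_hypH_centered[OF h(1,2)] outRadius_sq_identity[OF real_d_pos] by linarith
qed

lemma inner_inBall_outBall_ge:
  fixes u v :: "real^'n"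
  assumes "u \<in> inBall d" "v \<in> outBall d"
  shows "1 / (real d * (real d + 1)) \<le> inner u v"
proof -
  let ?r = "sqrt ((real d - 1) / ((real d)^2 * (real d + 1)))"
  let ?s = "sqrt (1 / ((real d)^2 * ((real d)^2 - 1)))"
  have h: "u \<in> hypH" "v \<in> hypH" "norm (u - cvec d) \<le> ?s" "norm (v - cvec d) \<le> ?r"
    using assms by (auto simp: outBall_def inBall_def)
  have "- inner (u - cvec d) (v - cvec d) \<le> norm (u - cvec d) * norm (v - cvec d)"
    using Cauchy_Schwarz_ineq2[of "u - cvec d" "v - cvec d"] by linarith
  also have "\<dots> \<le> ?s * ?r"
    using h outRadius_sq_nonneg inRadius_denom_nonneg by (intro mult_mono) auto
  also have "\<dots> = 1 / (real d)^2 - 1 / (real d * (real d + 1))"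
    using inRadius_times_outRadius d_ge_2 by simp
  finally show ?thesis
    using inner_hypH_centered[OF h(1,2)] by linarith
qed

lemma inBall_subset_outBall: "inBall d \<subseteq> (outBall d :: (real^'n) set)"
  using inRadius_le_outRadius[of "real d"] d_ge_2
  by (auto simp: inBall_def outBall_def intro: order_trans)

lemma cvec_in_inBall: "cvec d \<in> (inBall d :: (real^'n) set)"
  using cvec_in_hypH inRadius_denom_nonneg by (simp add: inBall_def)

lemma inner_basisDist:
  fixes u :: "real^'n"
  assumes "u \<in> hypH"
  shows "inner u (basisDist d k) = (u$k + 1 / real d) / (real d + 1)"
proof -
  let ?a = "1 / (real d + 1)" and ?b = "1 / (real d + 1) / real d"
  have "inner u (basisDist d k) = (\<Sum>i\<in>UNIV. (if i = k then ?a * u$i else 0) + ?b * u$i)"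
    by (auto simp: inner_vec_def basisDist_def algebra_simps intro!: sum.cong)
  also have "\<dots> = (\<Sum>i\<in>UNIV. (if i = k then ?a * u$i else 0)) + (\<Sum>i\<in>UNIV. ?b * u$i)"
    by (rule sum.distrib)
  also have "\<dots> = ?a * u$k + ?b"
    by (simp only: sum.delta sum_scaled_hypH[OF assms]) simp
  finally show ?thesis
    by (simp add: add_divide_distrib)
qed

lemma basisDist_in_hypH: "basisDist d k \<in> (hypH :: (real^'n) set)"
proof -
  let ?a = "1 / (real d + 1)" and ?b = "1 / (real d + 1) / real d"
  have "(\<Sum>i\<in>UNIV. (basisDist d k :: real^'n)$i) = (\<Sum>i\<in>UNIV. (if i = k then ?a else 0) + ?b)"
    by (auto simp: basisDist_def algebra_simps intro!: sum.cong)
  also have "\<dots> = ?a + (real d)^2 * ?b"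
    using card_eq by (simp add: sum.distrib sum.delta)
  also have "\<dots> = 1"
    using real_d_pos by (simp add: divide_simps power2_eq_square)
  finally show ?thesis
    by (simp add: hypH_def)
qed

lemma threshold_le_inner_basisDist_iff:
  fixes u :: "real^'n"
  assumes "u \<in> hypH"
  shows "1 / (real d * (real d + 1)) \<le> inner u (basisDist d k) \<longleftrightarrow> 0 \<le> u$k"
proof -
  have "1 / (real d * (real d + 1)) = (1 / real d) / (real d + 1)"
    by simp
  moreover have "(1 / real d) / (real d + 1) \<le> (u$k + 1 / real d) / (real d + 1) \<longleftrightarrow> 0 \<le> u$k"
    using real_d_pos by (subst divide_le_cancel) auto
  ultimately show ?thesis
    unfolding inner_basisDist[OF assms] by simp
qed

lemma basisDist_in_outBall: "basisDist d k \<in> (outBall d :: (real^'n) set)"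
proof -
  have "1 + 1 / real d = (real d + 1) / real d"
    using real_d_pos by (simp add: field_simps)
  then have "(basisDist d k :: real^'n) $ k = 1 / real d"
    by (simp add: basisDist_def)
  then have "inner (basisDist d k) (basisDist d k :: real^'n) = (1 / real d + 1 / real d) / (real d + 1)"
    by (simp add: inner_basisDist[OF basisDist_in_hypH])
  also have "\<dots> = 2 / (real d * (real d + 1))"
    by simp
  finally show ?thesis
    using basisDist_in_hypH outBall_iff_inner by simp
qed

lemma polar_inBall_subset_outBall: "polar d (inBall d) \<subseteq> (outBall d :: (real^'n) set)"
proof
  fix u :: "real^'n"
  assume u: "u \<in> polar d (inBall d)"
  let ?ro = "sqrt ((real d - 1) / ((real d)^2 * (real d + 1)))"
  let ?ri = "sqrt (1 / ((real d)^2 * ((real d)^2 - 1)))"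
  let ?c = "cvec d :: real^'n"
  define n where "n = norm (u - ?c)"
  have uH: "u \<in> hypH"
    using u by (simp add: polar_def)
  show "u \<in> outBall d"
  proof (rule ccontr)
    assume "u \<notin> outBall d"
    then have n_gt: "n > ?ro"
      using uH by (auto simp: outBall_def n_def)
    then have n_pos: "n > 0"
      using real_sqrt_ge_zero[OF outRadius_sq_nonneg] by linarith
    have ri_pos: "?ri > 0"
      using d_ge_2 by (simp add: one_less_power)
    \<comment> \<open>the point of the in-ball diametrically opposite to u violates the polar inequality\<close>
    define b where "b = ?c - (?ri / n) *\<^sub>R (u - ?c)"
    have "(\<Sum>i\<in>UNIV. b$i) = (\<Sum>i\<in>UNIV. ?c$i) - (?ri / n) * ((\<Sum>i\<in>UNIV. u$i) - (\<Sum>i\<in>UNIV. ?c$i))"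
      by (simp add: b_def sum_subtractf sum_distrib_left[symmetric] sum_divide_distrib[symmetric])
    then have bH: "b \<in> hypH"
      using uH cvec_in_hypH by (simp add: hypH_def)
    have "norm (b - ?c) = ?ri"
      using n_pos ri_pos by (simp add: b_def n_def)
    then have "b \<in> inBall d"
      using bH by (simp add: inBall_def)
    then have "1 / (real d * (real d + 1)) \<le> inner u b"
      using u by (simp add: polar_def)
    also have "inner u b = 1 / (real d)^2 - ?ri * n"
      using n_pos inner_hypH_centered[OF uH bH]
      by (simp add: b_def n_def power2_norm_eq_inner[symmetric] power2_eq_square)
    finally have "?ri * n \<le> ?ri * ?ro"
      using inRadius_times_outRadius d_ge_2 by simp
    then show False
      using n_gt ri_pos by simp
  qed
qed

lemma polar_basisDist_inBall:
  "polar d (range (basisDist d) \<union> inBall d) = probSimplex \<inter> (outBall d :: (real^'n) set)"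
proof
  show "polar d (range (basisDist d) \<union> inBall d) \<subseteq> probSimplex \<inter> (outBall d :: (real^'n) set)"
  proof
    fix u :: "real^'n"
    assume u: "u \<in> polar d (range (basisDist d) \<union> inBall d)"
    then have uH: "u \<in> hypH"
      by (simp add: polar_def)
    have "0 \<le> u$k" for k
      using u threshold_le_inner_basisDist_iff[OF uH] by (simp add: polar_def)
    then have "u \<in> probSimplex"
      using uH by (simp add: probSimplex_def hypH_def)
    moreover have "u \<in> outBall d"
      using u polar_inBall_subset_outBall polar_Un by blast
    ultimately show "u \<in> probSimplex \<inter> outBall d"
      by blast
  qed
  show "probSimplex \<inter> outBall d \<subseteq> polar d (range (basisDist d) \<union> (inBall d :: (real^'n) set))"
    using threshold_le_inner_basisDist_iff inner_inBall_outBall_ge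
    by (fastforce simp: polar_def probSimplex_def hypH_def inner_commute)
qed

lemma basisDist_inBall_subset:
  "range (basisDist d) \<union> inBall d \<subseteq> probSimplex \<inter> (outBall d :: (real^'n) set)"
proof -
  have "0 \<le> u$k" if "u \<in> inBall d" for u :: "real^'n" and k
    using inner_inBall_outBall_ge[OF that basisDist_in_outBall] that
      threshold_le_inner_basisDist_iff
    by (simp add: inBall_def)
  then have "inBall d \<subseteq> (probSimplex :: (real^'n) set)"
    by (auto simp: inBall_def probSimplex_def hypH_def)
  moreover have "range (basisDist d) \<subseteq> (probSimplex :: (real^'n) set)"
    using basisDist_in_hypH real_d_pos by (auto simp: probSimplex_def hypH_def basisDist_def)
  ultimately show ?thesis
    using basisDist_in_outBall inBall_subset_outBall by blast
qed

lemma germ_iff_polar: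
  "germ d A \<longleftrightarrow> A \<subseteq> probSimplex \<inter> outBall d \<and> A \<subseteq> polar d (A :: (real^'n) set)"
proof
  assume A: "germ d A"
  then have "A \<subseteq> outBall d"
    by (auto simp: germ_def outBall_iff_inner probSimplex_def hypH_def)
  with A show "A \<subseteq> probSimplex \<inter> outBall d \<and> A \<subseteq> polar d A"
    by (auto simp: germ_def polar_def probSimplex_def hypH_def)
next
  assume "A \<subseteq> probSimplex \<inter> outBall d \<and> A \<subseteq> polar d A"
  then show "germ d A"
    using inner_outBall_le by (fastforce simp: germ_def polar_def)
qed

lemma germ_insert:
  fixes p :: "real^'n"
  assumes M: "germ d M" and p: "p \<in> probSimplex \<inter> outBall d" "p \<in> polar d M"
  shows "germ d (insert p M)"
proof -
  have H: "insert p M \<subseteq> hypH"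
    using M p by (auto simp: germ_iff_polar outBall_def)
  have "insert p M \<subseteq> polar d (insert p M)"
    using M p H threshold_le_inner_self
    by (fastforce simp: germ_iff_polar polar_def inner_commute)
  then show ?thesis
    using M p by (simp add: germ_iff_polar)
qed

lemma qplex_if_maximal_germ:
  fixes M :: "(real^'n) set"
  assumes M: "germ d M" and maximal: "\<And>p. germ d (insert p M) \<Longrightarrow> p \<in> M"
  shows "qplex d M"
proof -
  let ?R = "range (basisDist d) \<union> (inBall d :: (real^'n) set)"
  have M_sub: "M \<subseteq> probSimplex \<inter> outBall d" and M_polar: "M \<subseteq> polar d M"
    using M by (simp_all add: germ_iff_polar)
  have hypH_sub: "probSimplex \<inter> outBall d \<subseteq> (hypH :: (real^'n) set)"
    by (auto simp: outBall_def)
  have insert_mem: "p \<in> M" if "p \<in> probSimplex \<inter> outBall d" "p \<in> polar d M" for p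
    using maximal germ_insert[OF M that] .
  have "M \<subseteq> polar d ?R"
    using M_sub by (simp add: polar_basisDist_inBall)
  then have "?R \<subseteq> polar d M"
    using subset_polar_iff M_sub basisDist_inBall_subset hypH_sub by blast
  then have "?R \<subseteq> M"
    using basisDist_inBall_subset insert_mem by blast
  then have "polar d M \<subseteq> polar d ?R"
    by (rule polar_antimono)
  then have "polar d M \<subseteq> probSimplex \<inter> outBall d"
    by (simp only: polar_basisDist_inBall)
  then have "polar d M = M"
    using insert_mem M_polar by blast
  with M_sub show ?thesis
    by (simp add: qplex_def)
qed

lemma exists_qplex_superset:
  fixes G :: "(real^'n) set"
  assumes "germ d G"
  shows "\<exists>Q. qplex d Q \<and> G \<subseteq> Q"
proof -
  let ?A = "{M. germ d M \<and> G \<subseteq> M}"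
  have "\<exists>M\<in>?A. \<forall>X\<in>?A. M \<subseteq> X \<longrightarrow> X = M"
  proof (rule subset_Zorn_nonempty)
    show "?A \<noteq> {}"
      using assms by blast
    show "\<Union>\<C> \<in> ?A" if "\<C> \<noteq> {}" "subset.chain ?A \<C>" for \<C>
      using germ_Union_chain[OF that] by simp
  qed
  then obtain M where M: "germ d M" "G \<subseteq> M" and maximal: "\<forall>X\<in>?A. M \<subseteq> X \<longrightarrow> X = M"
    by blast
  have "qplex d M"
  proof (rule qplex_if_maximal_germ[OF M(1)])
    fix p
    assume "germ d (insert p M)"
    then show "p \<in> M"
      using maximal M(2) by blast
  qed
  with M(2) show ?thesis
    by blast
qed

lemma tilted_cvec:
  fixes a :: "real^'n" and \<mu> :: real
  defines "p \<equiv> \<chi> i. 1 / (real d)^2 + \<mu> * (a$i - inner a (cvec d))"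
  shows "p \<in> hypH"
    and "\<And>y. y \<in> hypH \<Longrightarrow> inner p y = 1 / (real d)^2 + \<mu> * (inner a y - inner a (cvec d))"
proof -
  define \<alpha> where "\<alpha> = inner a (cvec d)"
  have p_eq: "p = (\<chi> i. (1 / (real d)^2 - \<mu> * \<alpha>) + \<mu> * a$i)"
    by (simp add: p_def \<alpha>_def[symmetric] vec_eq_iff algebra_simps)
  have "\<alpha> = (\<Sum>i\<in>UNIV. a$i) / (real d)^2"
    by (simp add: \<alpha>_def inner_vec_def cvec_def sum_divide_distrib)
  then have "(\<Sum>i\<in>UNIV. p$i) = (real d)^2 * (1 / (real d)^2 - \<mu> * \<alpha>) + \<mu> * (real d)^2 * \<alpha>"
    using card_eq real_d_pos by (simp add: p_eq sum.distrib sum_distrib_left[symmetric])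
  also have "\<dots> = 1"
    using real_d_pos by (simp add: algebra_simps)
  finally show "p \<in> hypH"
    by (simp add: hypH_def)
  fix y :: "real^'n"
  assume y: "y \<in> hypH"
  have "inner p y = (\<Sum>i\<in>UNIV. (1 / (real d)^2 - \<mu> * \<alpha>) * y$i + \<mu> * (a$i * y$i))"
    by (simp add: p_eq inner_vec_def distrib_right mult.assoc)
  also have "\<dots> = (\<Sum>i\<in>UNIV. (1 / (real d)^2 - \<mu> * \<alpha>) * y$i) + \<mu> * (\<Sum>i\<in>UNIV. a$i * y$i)"
    by (simp add: sum.distrib sum_distrib_left)
  also have "\<dots> = 1 / (real d)^2 - \<mu> * \<alpha> + \<mu> * inner a y"
    by (simp only: sum_scaled_hypH[OF y]) (simp add: inner_vec_def)
  finally show "inner p y = 1 / (real d)^2 + \<mu> * (inner a y - inner a (cvec d))"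
    by (simp add: \<alpha>_def algebra_simps)
qed

lemma polar_separates_point:
  fixes S :: "(real^'n) set"
  assumes "closed S" "convex S" "S \<subseteq> hypH" "cvec d \<in> S"
    and x: "x \<in> hypH" "x \<notin> S"
  obtains p where "p \<in> polar d S" "inner p x < 1 / (real d * (real d + 1))"
proof -
  obtain a b where ab: "inner a x < b" "\<forall>y\<in>S. b < inner a y"
    using separating_hyperplane_closed_point[OF assms(2,1) x(2)] by blast
  \<comment> \<open>rescale the separating functional around c so that its level b becomes the polar threshold\<close>
  let ?\<alpha> = "inner a (cvec d)"
  define \<kappa> where "\<kappa> = 1 / (real d)^2 - 1 / (real d * (real d + 1))"
  define \<mu> where "\<mu> = \<kappa> / (?\<alpha> - b)"
  define p :: "real^'n" where "p = (\<chi> i. 1 / (real d)^2 + \<mu> * (a$i - ?\<alpha>))"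
  have "\<kappa> > 0" and "b < ?\<alpha>"
    using threshold_less_inverse_sq[OF real_d_pos] ab(2) assms(4) by (auto simp: \<kappa>_def)
  then have \<mu>_pos: "\<mu> > 0" and \<mu>_b: "\<mu> * (b - ?\<alpha>) = - \<kappa>"
    by (simp_all add: \<mu>_def divide_simps, simp add: algebra_simps)
  have inner_p: "inner p y = 1 / (real d)^2 + \<mu> * (inner a y - ?\<alpha>)" if "y \<in> hypH" for y
    using tilted_cvec(2)[OF that] by (simp add: p_def)
  have "1 / (real d * (real d + 1)) \<le> inner p y" if y: "y \<in> S" for y
  proof -
    have "\<mu> * (b - ?\<alpha>) < \<mu> * (inner a y - ?\<alpha>)"
      using ab(2) y \<mu>_pos by simp
    then show ?thesis
      using inner_p[of y] assms(3) y \<mu>_b \<kappa>_def by auto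
  qed
  then have "p \<in> polar d S"
    using tilted_cvec(1) by (simp add: polar_def p_def)
  moreover have "\<mu> * (inner a x - ?\<alpha>) < \<mu> * (b - ?\<alpha>)"
    using ab(1) \<mu>_pos by simp
  then have "inner p x < 1 / (real d * (real d + 1))"
    using inner_p[OF x(1)] \<mu>_b \<kappa>_def by simp
  ultimately show ?thesis
    by (rule that)
qed

lemma polar_polar_eq:
  fixes S :: "(real^'n) set"
  assumes "closed S" "convex S" "S \<subseteq> hypH" "cvec d \<in> S"
  shows "polar d (polar d S) = S"
proof
  show "S \<subseteq> polar d (polar d S)"
    using subset_polar_iff[OF assms(3) polar_subset_hypH] by blast
  show "polar d (polar d S) \<subseteq> S"
  proof
    fix x
    assume x: "x \<in> polar d (polar d S)"
    show "x \<in> S"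
    proof (rule ccontr)
      assume "x \<notin> S"
      moreover have "x \<in> hypH"
        using x polar_subset_hypH by blast
      ultimately obtain p where "p \<in> polar d S" "inner p x < 1 / (real d * (real d + 1))"
        using polar_separates_point[OF assms] by blast
      then show False
        using x by (auto simp: polar_def inner_commute)
    qed
  qed
qed

lemma polar_stem:
  "polar d (closure (convex hull (basisSimplex d \<union> inBall d \<union> G)))
    = probSimplex \<inter> outBall d \<inter> polar d (G :: (real^'n) set)"
proof -
  have "polar d (closure (convex hull (basisSimplex d \<union> inBall d \<union> G)))
      = polar d (range (basisDist d) \<union> inBall d) \<inter> polar d G"
    by (simp add: polar_closure polar_convex_hull polar_Un basisSimplex_def)
  then show ?thesis
    by (simp add: polar_basisDist_inBall)
qed

lemma stem_subset_hypH:
  assumes "G \<subseteq> hypH"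
  shows "closure (convex hull (basisSimplex d \<union> inBall d \<union> G)) \<subseteq> (hypH :: (real^'n) set)"
proof -
  have "basisSimplex d \<subseteq> (hypH :: (real^'n) set)"
    unfolding basisSimplex_def
    by (rule hull_minimal) (use basisDist_in_hypH convex_hypH in auto)
  moreover have "inBall d \<subseteq> (hypH :: (real^'n) set)"
    by (auto simp: inBall_def)
  ultimately have "convex hull (basisSimplex d \<union> inBall d \<union> G) \<subseteq> hypH"
    using assms convex_hypH by (intro hull_minimal) auto
  then show ?thesis
    using closed_hypH by (rule closure_minimal)
qed

lemma polar_envelope:
  assumes "G \<subseteq> hypH"
  shows "polar d (probSimplex \<inter> outBall d \<inter> polar d G)
    = closure (convex hull (basisSimplex d \<union> inBall d \<union> (G :: (real^'n) set)))"
proof -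
  have "basisSimplex d \<union> inBall d \<union> G \<subseteq> closure (convex hull (basisSimplex d \<union> inBall d \<union> G))"
    by (rule order_trans[OF hull_subset closure_subset])
  then have "cvec d \<in> closure (convex hull (basisSimplex d \<union> inBall d \<union> G))"
    using cvec_in_inBall by blast
  then show ?thesis
    using polar_polar_eq[OF closed_closure convex_closure[OF convex_convex_hull]
        stem_subset_hypH[OF assms]]
    by (simp add: polar_stem)
qed

lemma union_qplexes_containing_germ:
  fixes G :: "(real^'n) set"
  assumes G: "germ d G"
  shows "\<Union>{Q. qplex d Q \<and> G \<subseteq> Q} = probSimplex \<inter> outBall d \<inter> polar d G"
proof
  show "\<Union>{Q. qplex d Q \<and> G \<subseteq> Q} \<subseteq> probSimplex \<inter> outBall d \<inter> polar d G"
  proof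
    fix x
    assume "x \<in> \<Union>{Q. qplex d Q \<and> G \<subseteq> Q}"
    then obtain Q where Q: "qplex d Q" "G \<subseteq> Q" "x \<in> Q"
      by blast
    then have "x \<in> polar d G"
      using polar_antimono[OF Q(2), of d] Q(1) by (auto simp: qplex_def)
    with Q show "x \<in> probSimplex \<inter> outBall d \<inter> polar d G"
      by (auto simp: qplex_def)
  qed
  show "probSimplex \<inter> outBall d \<inter> polar d G \<subseteq> \<Union>{Q. qplex d Q \<and> G \<subseteq> Q}"
  proof
    fix p
    assume "p \<in> probSimplex \<inter> outBall d \<inter> polar d G"
    then have "germ d (insert p G)"
      using germ_insert[OF G] by blast
    then show "p \<in> \<Union>{Q. qplex d Q \<and> G \<subseteq> Q}"
      using exists_qplex_superset by blast
  qed
qed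

lemma polar_Union_qplexes:
  assumes "\<Q> \<noteq> {}" "\<And>Q. Q \<in> \<Q> \<Longrightarrow> qplex d Q"
  shows "polar d (\<Union>\<Q>) = \<Inter>\<Q>"
  using assms by (simp add: polar_Union qplex_def)

lemma stem_envelope:
  fixes G :: "(real^'n) set"
  assumes G: "germ d G"
  shows "{Q. qplex d Q \<and> G \<subseteq> Q} \<noteq> {}
    \<and> \<Inter>{Q. qplex d Q \<and> G \<subseteq> Q} = closure (convex hull (basisSimplex d \<union> inBall d \<union> G))
    \<and> \<Union>{Q. qplex d Q \<and> G \<subseteq> Q} = probSimplex \<inter> outBall d \<inter> polar d G
    \<and> polar d (\<Inter>{Q. qplex d Q \<and> G \<subseteq> Q}) = \<Union>{Q. qplex d Q \<and> G \<subseteq> Q}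
    \<and> polar d (\<Union>{Q. qplex d Q \<and> G \<subseteq> Q}) = \<Inter>{Q. qplex d Q \<and> G \<subseteq> Q}"
proof -
  let ?Qs = "{Q. qplex d Q \<and> G \<subseteq> Q}"
  have nonempty: "?Qs \<noteq> {}"
    using exists_qplex_superset[OF G] by blast
  have "G \<subseteq> hypH"
    using G by (auto simp: germ_def probSimplex_def hypH_def)
  have union: "\<Union>?Qs = probSimplex \<inter> outBall d \<inter> polar d G"
    by (rule union_qplexes_containing_germ[OF G])
  have inter: "\<Inter>?Qs = polar d (\<Union>?Qs)"
    using polar_Union_qplexes[OF nonempty] by simp
  also have "\<dots> = closure (convex hull (basisSimplex d \<union> inBall d \<union> G))"
    using union polar_envelope[OF \<open>G \<subseteq> hypH\<close>] by simp
  finally show ?thesis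
    using nonempty union inter polar_stem by simp
qed

end

theorem mainTheorem4:
  fixes d :: nat and G :: "(real^'n) set"
  assumes "d \<ge> 2" and "CARD('n) = d^2" and "germ d G"
  shows "{Q. qplex d Q \<and> G \<subseteq> Q} \<noteq> {}
    \<and> \<Inter>{Q. qplex d Q \<and> G \<subseteq> Q} = closure (convex hull (basisSimplex d \<union> inBall d \<union> G))
    \<and> \<Union>{Q. qplex d Q \<and> G \<subseteq> Q} = probSimplex \<inter> outBall d \<inter> polar d G
    \<and> polar d (\<Inter>{Q. qplex d Q \<and> G \<subseteq> Q}) = \<Union>{Q. qplex d Q \<and> G \<subseteq> Q}
    \<and> polar d (\<Union>{Q. qplex d Q \<and> G \<subseteq> Q}) = \<Inter>{Q. qplex d Q \<and> G \<subseteq> Q}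
    \<and> \<Inter>{Q :: (real^'n) set. qplex d Q} = closure (convex hull (basisSimplex d \<union> inBall d))
    \<and> \<Union>{Q :: (real^'n) set. qplex d Q} = probSimplex \<inter> outBall d"
proof -
  have empty_germ: "germ d ({} :: (real^'n) set)"
    by (simp add: germ_def)
  have "probSimplex \<inter> outBall d \<inter> polar d {} = probSimplex \<inter> (outBall d :: (real^'n) set)"
    by (auto simp: polar_empty outBall_def)
  then have "\<Inter>{Q :: (real^'n) set. qplex d Q} = closure (convex hull (basisSimplex d \<union> inBall d))"
    and "\<Union>{Q :: (real^'n) set. qplex d Q} = probSimplex \<inter> outBall d"
    using stem_envelope[OF assms(1,2) empty_germ] by simp_all
  with stem_envelope[OF assms] show ?thesis
    by blast
qed

end
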